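(* Let $n\ge 0$, $k\ge1$ be integers. Let $\mathcal A$ be any (deterministic) algorithm that, given oracle access to an arbitrary feasibility function $f:\{0,\dots,n\}^k\to\{\mathbf{true},\mathbf{false}\}$, terminates and outputs exactly the set $P$ of Pareto points of $f$. Then for every feasibility function $f$, the run of $\mathcal A$ on $f$ evaluates $f$ at every co-Pareto point of $f$ (the co-Pareto front induced by $P$).
   Context: For $\vec x,\vec x'\in\{0,\dots,n\}^k$, $\vec x\le_k\vec x'$ iff $x_i\le x'_i$ for all $i$; $\vec x$ is smaller than $\vec x'$ (and $\vec x'$ greater than $\vec x$) if $\vec x\le_k\vec x'$ and $\vec x\neq\vec x'$. A feasibility function is a monotone $f:\{0,\dots,n\}^k\to\{\mathbf{true},\mathbf{false}\}$: if $f(\vec x)=\mathbf{true}$ then $f(\vec x')=\mathbf{true}$ for all $\vec x'$ greater than $\vec x$. A Pareto point of $f$ is an $\vec x$ with $f(\vec x)=\mathbf{true}$ and $f(\vec x')=\mathbf{false}$ for all $\vec x'$ smaller than $\vec x$. A co-Pareto point of $f$ is an $\vec x$ with $f(\vec x)=\mathbf{false}$ and $f(\vec x')=\mathbf{true}$ for all $\vec x'$ greater than $\vec x$. The algorithm accesses $f$ only through queries returning $f(\vec x)$ for chosen points $\vec x$. *)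

theory Defs
  imports Main
begin

definition grid :: "nat \<Rightarrow> nat \<Rightarrow> nat list set" where
  "grid n k = {x. length x = k \<and> (\<forall>i<k. x ! i \<le> n)}"

definition le_k :: "nat \<Rightarrow> nat list \<Rightarrow> nat list \<Rightarrow> bool" where
  "le_k k x x' \<longleftrightarrow> (\<forall>i<k. x ! i \<le> x' ! i)"

definition smaller :: "nat \<Rightarrow> nat list \<Rightarrow> nat list \<Rightarrow> bool" where
  "smaller k x x' \<longleftrightarrow> le_k k x x' \<and> x \<noteq> x'"

text \<open>A feasibility function: monotone on the grid (values outside the grid are irrelevant).\<close>
definition feasibility :: "nat \<Rightarrow> nat \<Rightarrow> (nat list \<Rightarrow> bool) \<Rightarrow> bool" where
  "feasibility n k f \<longleftrightarrow>
     (\<forall>x\<in>grid n k. \<forall>x'\<in>grid n k. f x \<and> smaller k x x' \<longrightarrow> f x')"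

definition pareto_points :: "nat \<Rightarrow> nat \<Rightarrow> (nat list \<Rightarrow> bool) \<Rightarrow> nat list set" where
  "pareto_points n k f =
     {x\<in>grid n k. f x \<and> (\<forall>x'\<in>grid n k. smaller k x' x \<longrightarrow> \<not> f x')}"

definition copareto_points :: "nat \<Rightarrow> nat \<Rightarrow> (nat list \<Rightarrow> bool) \<Rightarrow> nat list set" where
  "copareto_points n k f =
     {x\<in>grid n k. \<not> f x \<and> (\<forall>x'\<in>grid n k. smaller k x x' \<longrightarrow> f x')}"

text \<open>Deterministic oracle algorithms are modelled as (well-founded, hence always
terminating) adaptive decision trees: a node queries f at a point and continues
depending on the answer; a leaf outputs a set of points.\<close>
datatype 'p qtree = Output "'p set" | Query 'p "bool \<Rightarrow> 'p qtree"

primrec run :: "('p \<Rightarrow> bool) \<Rightarrow> 'p qtree \<Rightarrow> 'p set" where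
  "run f (Output S) = S"
| "run f (Query x c) = run f (c (f x))"

primrec queried :: "('p \<Rightarrow> bool) \<Rightarrow> 'p qtree \<Rightarrow> 'p set" where
  "queried f (Output S) = {}"
| "queried f (Query x c) = insert x (queried f (c (f x)))"

end

theory Submission
  imports Defs
begin

text \<open>An adversary argument. If a co-Pareto point x of f is never queried, the run on
f coincides with the run on f(x := True). Raising f at x keeps it monotone, since every
point above x is already feasible, and turns x into a Pareto point, since every point
below x is infeasible. So the two runs would have to output different Pareto sets.\<close>

lemma run_cong_queried:
  assumes "\<forall>y\<in>queried f T. g y = f y"
  shows "run g T = run f T"
  using assms by (induction T) auto

lemma feasibility_fun_upd_copareto:
  assumes feas: "feasibility n k f" and x: "x \<in> copareto_points n k f"
  shows "feasibility n k (f(x := True))"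
  unfolding feasibility_def
proof (intro ballI impI)
  fix y y' assume y: "y \<in> grid n k" and y': "y' \<in> grid n k"
    and h: "(f(x := True)) y \<and> smaller k y y'"
  have "f y'"
  proof (cases "y = x")
    case True
    then have "smaller k x y'" using h by simp
    then show ?thesis using x y' unfolding copareto_points_def by blast
  next
    case False
    then have "f y" using h by simp
    then show ?thesis using h feas y y' unfolding feasibility_def by blast
  qed
  then show "(f(x := True)) y'" by simp
qed

lemma copareto_in_pareto_fun_upd:
  assumes feas: "feasibility n k f" and x: "x \<in> copareto_points n k f"
  shows "x \<in> pareto_points n k (f(x := True))"
proof -
  have xg: "x \<in> grid n k" and fx: "\<not> f x"
    using x by (auto simp: copareto_points_def)
  have "\<not> f y" if "y \<in> grid n k" "smaller k y x" for y
    using feas that xg fx unfolding feasibility_def by blast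
  moreover have "y \<noteq> x" if "smaller k y x" for y
    using that by (simp add: smaller_def)
  ultimately show ?thesis
    using xg by (auto simp: pareto_points_def)
qed

theorem lemma6:
  fixes n k :: nat and A :: "nat list qtree"
  assumes "k \<ge> 1"
    and correct: "\<forall>g. feasibility n k g \<longrightarrow> run g A = pareto_points n k g"
    and "feasibility n k f"
  shows "copareto_points n k f \<subseteq> queried f A"
proof
  fix x assume x: "x \<in> copareto_points n k f"
  show "x \<in> queried f A"
  proof (rule ccontr)
    assume "x \<notin> queried f A"
    then have "run (f(x := True)) A = run f A"
      by (intro run_cong_queried) auto
    then have "pareto_points n k (f(x := True)) = pareto_points n k f"
      using correct feasibility_fun_upd_copareto[OF \<open>feasibility n k f\<close> x]
        \<open>feasibility n k f\<close> by metis
    moreover have "x \<notin> pareto_points n k f"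
      using x by (simp add: copareto_points_def pareto_points_def)
    ultimately show False
      using copareto_in_pareto_fun_upd[OF \<open>feasibility n k f\<close> x] by simp
  qed
qed

end
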